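(* Let $g:(0,\infty)\to(0,\infty)$ be a positive decreasing function with $\lim_{t\to+\infty}g(t)/g(2t)=2$ (respectively, $\lim_{t\to0+}g(t)/g(2t)=2$). Let $f\in L_\infty(0,\infty)$ be such that $\sup_{n\in\mathbb Z}\frac{1}{2^ng(2^n)}\left|\int_0^{2^n}f(s)\,ds\right|<\infty$. Then the sequence $$\left\{\frac{1}{2^ng(2^n)}\int_{2^n}^{2^{n+1}}f(s)\,ds\right\}_{n\in\mathbb Z}$$ belongs to $\mathrm{Range}(I-S_+)+c_0(\mathbb Z_+)$ (respectively, to $\mathrm{Range}(I-S_+)+c_0(\mathbb Z_-)$).
   Context: $\ell_\infty(\mathbb Z)$ is the space of bounded two-sided complex sequences, $(S_+x)_n=x_{n-1}$, and $\mathrm{Range}(I-S_+)=\{x-S_+x: x\in\ell_\infty(\mathbb Z)\}$. $c_0(\mathbb Z_+)$ denotes the set of $x\in\ell_\infty(\mathbb Z)$ with $x_n\to0$ as $n\to+\infty$, and $c_0(\mathbb Z_-)$ the set of $x\in\ell_\infty(\mathbb Z)$ with $x_n\to0$ as $n\to-\infty$. *)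

theory Defs
  imports "HOL-Analysis.Analysis"
begin

definition linf_Z :: "(int \<Rightarrow> complex) set" where
  "linf_Z = {x. bounded (range x)}"

definition shift_plus :: "(int \<Rightarrow> complex) \<Rightarrow> (int \<Rightarrow> complex)" where
  "shift_plus x = (\<lambda>n. x (n - 1))"

definition range_I_minus_S :: "(int \<Rightarrow> complex) set" where
  "range_I_minus_S = {(\<lambda>n. x n - shift_plus x n) | x. x \<in> linf_Z}"

definition c0_Zplus :: "(int \<Rightarrow> complex) set" where
  "c0_Zplus = {x \<in> linf_Z. (x \<longlongrightarrow> 0) at_top}"

definition c0_Zminus :: "(int \<Rightarrow> complex) set" where
  "c0_Zminus = {x \<in> linf_Z. (x \<longlongrightarrow> 0) at_bot}"

definition seq_set_plus :: "(int \<Rightarrow> complex) set \<Rightarrow> (int \<Rightarrow> complex) set \<Rightarrow> (int \<Rightarrow> complex) set" where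
  "seq_set_plus A B = {(\<lambda>n. a n + b n) | a b. a \<in> A \<and> b \<in> B}"

definition Linf_pos :: "(real \<Rightarrow> complex) set" where
  "Linf_pos = {f. set_borel_measurable lborel {0<..} f \<and>
      (\<exists>C. AE s in lborel. s \<in> {0<..} \<longrightarrow> norm (f s) \<le> C)}"

end

theory Submission
  imports Defs "HOL-Real_Asymp.Real_Asymp"
begin

text \<open>Put F n = (integral of f over [0, 2^n]) and G n = 2^n g(2^n), so the sequence in
  question is (F (n+1) - F n) / G n. With y n = F n / G n, bounded by hypothesis,
  (F (n+1) - F n) / G n = (y (n+1) - y n) + y (n+1) (G (n+1) / G n - 1).
  The first summand is (I - S+) applied to the bounded sequence y (n+1); the second tends to
  zero, since the hypothesis on g says exactly that G (n+1) / G n tends to 1.\<close>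

lemma seq_set_plus_range_I_minus_S_memI:
  assumes "x \<in> linf_Z" and "c \<in> C" and "\<And>n. y n = x n - x (n - 1) + c n"
  shows "y \<in> seq_set_plus range_I_minus_S C"
proof -
  have "(\<lambda>n. x n - shift_plus x n) \<in> range_I_minus_S"
    unfolding range_I_minus_S_def using assms(1) by blast
  moreover have "y = (\<lambda>n. (x n - shift_plus x n) + c n)"
    using assms(3) by (simp add: shift_plus_def fun_eq_iff)
  ultimately show ?thesis
    unfolding seq_set_plus_def using assms(2)
    by (intro CollectI exI[of _ "\<lambda>n. x n - shift_plus x n"] exI[of _ c]) auto
qed

lemma scaled_increments_in_range_I_minus_S_plus_null:
  fixes F :: "int \<Rightarrow> complex" and G :: "int \<Rightarrow> real"
  assumes G_pos: "\<And>n. G n > 0"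
    and F_bound: "\<And>n. norm (F n) / G n \<le> M"
    and G_growth: "\<And>n. G (n + 1) \<le> K * G n"
    and G_ratio: "((\<lambda>n. G (n + 1) / G n) \<longlongrightarrow> 1) Fl"
  shows "(\<lambda>n. complex_of_real (1 / G n) * (F (n + 1) - F n))
           \<in> seq_set_plus range_I_minus_S {x \<in> linf_Z. (x \<longlongrightarrow> 0) Fl}"
proof -
  define y where "y n = complex_of_real (1 / G n) * F n" for n
  define r where "r n = G (n + 1) / G n" for n
  define c where "c n = y (n + 1) * complex_of_real (r n - 1)" for n
  have y_bound: "norm (y n) \<le> M" for n
    using F_bound[of n] G_pos[of n] by (simp add: y_def norm_mult norm_divide)
  have r_bound: "\<bar>r n - 1\<bar> \<le> \<bar>K\<bar> + 1" for n
  proof -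
    have "0 < r n" "r n \<le> K"
      using G_growth[of n] G_pos[of n] G_pos[of "n + 1"] by (simp_all add: r_def divide_le_eq)
    then show ?thesis by linarith
  qed
  have c_bound: "norm (c n) \<le> M * \<bar>r n - 1\<bar>" for n
    using y_bound[of "n + 1"] by (simp add: c_def norm_mult mult_right_mono del: of_real_diff)
  have "(\<lambda>n. y (n + 1)) \<in> linf_Z"
    unfolding linf_Z_def bounded_iff using y_bound by blast
  moreover have "c \<in> linf_Z"
  proof -
    have "norm (c n) \<le> M * (\<bar>K\<bar> + 1)" for n
      using c_bound[of n] r_bound[of n] y_bound[of 0]
      by (meson mult_left_mono norm_ge_zero order_trans)
    then show ?thesis unfolding linf_Z_def bounded_iff by blast
  qed
  moreover have "(c \<longlongrightarrow> 0) Fl"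
  proof (rule Lim_null_comparison)
    show "\<forall>\<^sub>F n in Fl. norm (c n) \<le> M * \<bar>r n - 1\<bar>"
      using c_bound by simp
    have "((\<lambda>n. M * \<bar>r n - 1\<bar>) \<longlongrightarrow> M * \<bar>1 - 1\<bar>) Fl"
      using G_ratio unfolding r_def by (intro tendsto_intros)
    then show "((\<lambda>n. M * \<bar>r n - 1\<bar>) \<longlongrightarrow> 0) Fl" by simp
  qed
  moreover have "complex_of_real (1 / G n) * (F (n + 1) - F n) = y (n + 1) - y n + c n" for n
    using G_pos[of n] G_pos[of "n + 1"]
    by (simp add: y_def c_def r_def field_simps)
  ultimately show ?thesis
    by (intro seq_set_plus_range_I_minus_S_memI[where x = "\<lambda>n. y (n + 1)" and c = c]) auto
qed

lemma doubling_weight_ratio_tendsto_one: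
  fixes g :: "real \<Rightarrow> real"
  assumes lim: "((\<lambda>t. g t / g (2 * t)) \<longlongrightarrow> 2) F"
    and nz: "\<forall>\<^sub>F t in F. t \<noteq> 0 \<and> g t \<noteq> 0"
  shows "((\<lambda>t. (2 * t * g (2 * t)) / (t * g t)) \<longlongrightarrow> 1) F"
proof -
  have "((\<lambda>t. 2 / (g t / g (2 * t))) \<longlongrightarrow> 2 / 2) F"
    using lim by (intro tendsto_divide) auto
  moreover have "\<forall>\<^sub>F t in F. 2 / (g t / g (2 * t)) = (2 * t * g (2 * t)) / (t * g t)"
    using nz by eventually_elim (auto simp: field_simps)
  ultimately show ?thesis by (auto elim: Lim_transform_eventually)
qed

lemma powi_two_eq_powr: "(2::real) powi n = 2 powr real_of_int n"
  by (simp add: powr_real_of_int')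

lemma filterlim_powi_two_at_top: "filterlim (\<lambda>n::int. (2::real) powi n) at_top at_top"
proof -
  have "filterlim (\<lambda>x::real. 2 powr x) at_top at_top" by real_asymp
  from filterlim_compose[OF this filterlim_real_of_int_at_top] show ?thesis
    by (simp add: powi_two_eq_powr o_def)
qed

lemma filterlim_powi_two_at_bot: "filterlim (\<lambda>n::int. (2::real) powi n) (at_right 0) at_bot"
proof -
  have "filterlim (\<lambda>x::real. 2 powr x) (at_right 0) at_bot" by real_asymp
  from filterlim_compose[OF this filterlim_real_of_int_at_bot] show ?thesis
    by (simp add: powi_two_eq_powr o_def)
qed

lemma Linf_pos_set_integrable:
  fixes f :: "real \<Rightarrow> complex"
  assumes "f \<in> Linf_pos" and "0 \<le> a"
  shows "set_integrable lborel {0..a} f"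
proof -
  obtain C where meas: "set_borel_measurable lborel {0<..} f"
    and bound: "AE s in lborel. s \<in> {0<..} \<longrightarrow> norm (f s) \<le> C"
    using assms unfolding Linf_pos_def by blast
  have "set_integrable lborel {0<..a} f"
  proof (rule set_integrable_bound)
    show "set_integrable lborel {0<..a} (\<lambda>_. C)"
      by (rule set_integrable_subset[OF borel_integrable_atLeastAtMost'[of 0 a]]) auto
    show "set_borel_measurable lborel {0<..a} f"
      by (rule set_borel_measurable_subset[OF meas]) auto
    show "AE s in lborel. s \<in> {0<..a} \<longrightarrow> norm (f s) \<le> norm C"
      using bound by eventually_elim auto
  qed
  \<comment> \<open>\<open>f\<close> need not be measurable at 0, so the point 0 is added as a separate summand.\<close>
  then have "integrable lborel (\<lambda>s. indicator {0<..a} s *\<^sub>R f s + indicator {0::real} s *\<^sub>R f 0)"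
    unfolding set_integrable_def
    by (intro Bochner_Integration.integrable_add) (auto intro!: integrable_real_mult_indicator)
  moreover have "(\<lambda>s. indicator {0..a} s *\<^sub>R f s)
      = (\<lambda>s. indicator {0<..a} s *\<^sub>R f s + indicator {0::real} s *\<^sub>R f 0)"
    using assms(2) by (auto simp: fun_eq_iff indicator_def)
  ultimately show ?thesis unfolding set_integrable_def by simp
qed

lemma Linf_pos_integral_split:
  fixes f :: "real \<Rightarrow> complex"
  assumes "f \<in> Linf_pos" and "0 \<le> a" and "a \<le> b"
  shows "(LBINT s:{0..b}. f s) = (LBINT s:{0..a}. f s) + (LBINT s:{a..b}. f s)"
proof -
  have "(LBINT s:{0..a} \<union> {a..b}. f s) = (LBINT s:{0..a}. f s) + (LBINT s:{a..b}. f s)"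
  proof (rule set_integral_Un_AE)
    show "AE s in lborel. \<not> (s \<in> {0..a} \<and> s \<in> {a..b})"
      using AE_lborel_singleton[of a] by eventually_elim auto
    show "set_integrable lborel {0..a} f"
      using assms(1,2) by (rule Linf_pos_set_integrable)
    show "set_integrable lborel {a..b} f"
      by (rule set_integrable_subset[OF Linf_pos_set_integrable[OF assms(1), of b]])
        (use assms in auto)
  qed auto
  moreover have "{0..a} \<union> {a..b} = {0..b}" using assms by auto
  ultimately show ?thesis by simp
qed

theorem lemma2p14:
  fixes g :: "real \<Rightarrow> real" and f :: "real \<Rightarrow> complex"
  assumes gpos: "\<forall>t>0. g t > 0"
    and gdec: "\<forall>s t. 0 < s \<longrightarrow> s \<le> t \<longrightarrow> g t \<le> g s"
    and fL: "f \<in> Linf_pos"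
    and fsup: "bdd_above (range (\<lambda>n::int.
          norm (LBINT s:{0..(2::real) powi n}. f s) / ((2::real) powi n * g (2 powi n))))"
  shows "(((\<lambda>t. g t / g (2 * t)) \<longlongrightarrow> 2) at_top \<longrightarrow>
           (\<lambda>n::int. complex_of_real (1 / ((2::real) powi n * g (2 powi n))) *
              (LBINT s:{(2::real) powi n..2 powi (n + 1)}. f s))
             \<in> seq_set_plus range_I_minus_S c0_Zplus)
       \<and> (((\<lambda>t. g t / g (2 * t)) \<longlongrightarrow> 2) (at_right 0) \<longrightarrow>
           (\<lambda>n::int. complex_of_real (1 / ((2::real) powi n * g (2 powi n))) *
              (LBINT s:{(2::real) powi n..2 powi (n + 1)}. f s))
             \<in> seq_set_plus range_I_minus_S c0_Zminus)"
proof -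
  define G where "G n = (2::real) powi n * g (2 powi n)" for n :: int
  define F where "F n = (LBINT s:{0..(2::real) powi n}. f s)" for n :: int
  have powi_Suc: "(2::real) powi (n + 1) = 2 * 2 powi n" for n :: int
    by (simp add: power_int_add_1')
  have G_pos: "G n > 0" for n using gpos by (simp add: G_def)
  obtain M where F_bound: "norm (F n) / G n \<le> M" for n
    using fsup unfolding bdd_above_def F_def G_def by auto
  have G_growth: "G (n + 1) \<le> 2 * G n" for n
    using gdec gpos by (simp add: G_def powi_Suc)
  have integral_eq: "(LBINT s:{(2::real) powi n..2 powi (n + 1)}. f s) = F (n + 1) - F n" for n
    using Linf_pos_integral_split[OF fL, of "2 powi n" "2 powi (n + 1)"]
    by (simp add: F_def powi_Suc)
  have *: "(\<lambda>n::int. complex_of_real (1 / ((2::real) powi n * g (2 powi n))) *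
              (LBINT s:{(2::real) powi n..2 powi (n + 1)}. f s))
             \<in> seq_set_plus range_I_minus_S {x \<in> linf_Z. (x \<longlongrightarrow> 0) Fl}"
    if lim: "((\<lambda>t. g t / g (2 * t)) \<longlongrightarrow> 2) Ft" and pos: "\<forall>\<^sub>F t in Ft. t > 0"
      and powi: "filterlim (\<lambda>n::int. (2::real) powi n) Ft Fl" for Ft Fl
  proof -
    have "\<forall>\<^sub>F t in Ft. t \<noteq> 0 \<and> g t \<noteq> 0"
      using pos by eventually_elim (use gpos in fastforce)
    then have "((\<lambda>t. (2 * t * g (2 * t)) / (t * g t)) \<longlongrightarrow> 1) Ft"
      by (rule doubling_weight_ratio_tendsto_one[OF lim])
    from filterlim_compose[OF this powi]
    have "((\<lambda>n. G (n + 1) / G n) \<longlongrightarrow> 1) Fl"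
      by (simp add: G_def powi_Suc)
    from scaled_increments_in_range_I_minus_S_plus_null[OF G_pos F_bound G_growth this]
    show ?thesis by (simp add: G_def integral_eq)
  qed
  show ?thesis
    unfolding c0_Zplus_def c0_Zminus_def
    using *[OF _ eventually_gt_at_top filterlim_powi_two_at_top]
      *[OF _ eventually_at_right_less filterlim_powi_two_at_bot]
    by blast
qed

end
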